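(* Let $\lambda,\mu$ be strict partitions with $\mu\subseteq\lambda$. If the shifted skew diagram $\widetilde{\lambda/\mu}$ contains the three boxes $(i,j)$, $(i,j+1)$ and $(i+1,j+1)$ for some $i,j$, then $Q_{\lambda/\mu}$ is not $p$-positive.
   Context: For strict partitions $\mu\subseteq\lambda$, the shifted skew diagram $\widetilde{\lambda/\mu}$ is the set of boxes $(r,c)$ with $1\le r\le\ell(\lambda)$ and $r+\mu_r\le c\le r+\lambda_r-1$; $(r,c)$ means row $r$ (rows numbered top to bottom), column $c$. Let $\mathbf{P}'=\{1'<1<2'<2<\cdots\}$. A marked shifted tableau of shape $\widetilde{\lambda/\mu}$ is a filling of its boxes by letters of $\mathbf{P}'$ with rows and columns weakly increasing, each column containing at most one unmarked $k$ and each row at most one marked $k'$ for each $k$; its content counts entries $a$ with $|a|=i$. $Q_{\lambda/\mu}=\sum_T x^{c(T)}$ over all such tableaux. A symmetric function is $p$-positive if its expansion in the power sum basis $\{p_\nu\}$ has all coefficients nonnegative. *)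

theory Defs
  imports Complex_Main
begin

definition partition :: "nat list \<Rightarrow> bool" where
  "partition l \<longleftrightarrow> sorted_wrt (\<ge>) l \<and> (\<forall>x\<in>set l. 0 < x)"

definition strict_partition :: "nat list \<Rightarrow> bool" where
  "strict_partition l \<longleftrightarrow> sorted_wrt (>) l \<and> (\<forall>x\<in>set l. 0 < x)"

definition part :: "nat list \<Rightarrow> nat \<Rightarrow> nat" where
  "part l r = (if 1 \<le> r \<and> r \<le> length l then l ! (r - 1) else 0)"

definition part_contained :: "nat list \<Rightarrow> nat list \<Rightarrow> bool" where
  "part_contained mu la \<longleftrightarrow> (\<forall>r. part mu r \<le> part la r)"

text \<open>Boxes (r,c): row r (top to bottom), column c, with
  1 \<le> r \<le> len(lambda) and r + mu_r \<le> c \<le> r + lambda_r - 1.\<close>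
definition shifted_skew :: "nat list \<Rightarrow> nat list \<Rightarrow> (nat \<times> nat) set" where
  "shifted_skew la mu = {(r, c). 1 \<le> r \<and> r \<le> length la \<and>
       r + part mu r \<le> c \<and> c + 1 \<le> r + part la r}"

text \<open>The alphabet 1' < 1 < 2' < 2 < ... is encoded by positive naturals:
  k' is encoded as 2k-1 and k as 2k. Thus the order is the order of nat,
  odd codes are marked letters and the absolute value |a| is (a+1) div 2.\<close>

definition letter_abs :: "nat \<Rightarrow> nat" where
  "letter_abs a = (a + 1) div 2"

definition letter_marked :: "nat \<Rightarrow> bool" where
  "letter_marked a \<longleftrightarrow> odd a"

definition marked_shifted_tableau ::
    "nat list \<Rightarrow> nat list \<Rightarrow> (nat \<times> nat \<Rightarrow> nat) \<Rightarrow> bool" where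
  "marked_shifted_tableau la mu T \<longleftrightarrow>
     (let D = shifted_skew la mu in
       (\<forall>b. b \<notin> D \<longrightarrow> T b = 0) \<and>
       (\<forall>b\<in>D. 1 \<le> T b) \<and>
       \<comment> \<open>rows weakly increasing\<close>
       (\<forall>r c c'. (r, c) \<in> D \<and> (r, c') \<in> D \<and> c \<le> c' \<longrightarrow> T (r, c) \<le> T (r, c')) \<and>
       \<comment> \<open>columns weakly increasing\<close>
       (\<forall>r r' c. (r, c) \<in> D \<and> (r', c) \<in> D \<and> r \<le> r' \<longrightarrow> T (r, c) \<le> T (r', c)) \<and>
       \<comment> \<open>each column has at most one unmarked k\<close>
       (\<forall>r r' c. (r, c) \<in> D \<and> (r', c) \<in> D \<and> r \<noteq> r' \<and>
            \<not> letter_marked (T (r, c)) \<longrightarrow> T (r, c) \<noteq> T (r', c)) \<and>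
       \<comment> \<open>each row has at most one marked k'\<close>
       (\<forall>r c c'. (r, c) \<in> D \<and> (r, c') \<in> D \<and> c \<noteq> c' \<and>
            letter_marked (T (r, c)) \<longrightarrow> T (r, c) \<noteq> T (r, c')))"

text \<open>A monomial x^alpha in the variables x_1, x_2, ... is given by a list
  alpha of exponents: alpha ! (i-1) is the exponent of x_i (0 beyond the length).\<close>
definition expo :: "nat list \<Rightarrow> nat \<Rightarrow> nat" where
  "expo alpha i = part alpha i"

definition Q_coeff :: "nat list \<Rightarrow> nat list \<Rightarrow> nat list \<Rightarrow> real" where
  "Q_coeff la mu alpha = real (card {T. marked_shifted_tableau la mu T \<and>
      (\<forall>i\<ge>1. card {b \<in> shifted_skew la mu. letter_abs (T b) = i} = expo alpha i)})"

text \<open>Coefficient of x^alpha in the power sum p_nu = prod_j (sum_i x_i^(nu_j)):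
  the number of ways to assign to each part nu_j a variable index g_j \<ge> 1
  such that the parts assigned to x_i sum to alpha_i.\<close>
definition p_coeff :: "nat list \<Rightarrow> nat list \<Rightarrow> real" where
  "p_coeff nu alpha = real (card {g :: nat list. length g = length nu \<and> (\<forall>k\<in>set g. 1 \<le> k) \<and>
      (\<forall>i\<ge>1. (\<Sum>j | j < length nu \<and> g ! j = i. nu ! j) = expo alpha i)})"

text \<open>A symmetric function (given by its monomial coefficients) is p-positive
  if it is a finite linear combination of power sums p_nu with nonnegative
  coefficients (the expansion in the basis p_nu being unique).\<close>
definition p_positive :: "(nat list \<Rightarrow> real) \<Rightarrow> bool" where
  "p_positive f \<longleftrightarrow> (\<exists>S c. finite S \<and> (\<forall>nu\<in>S. partition nu) \<and> (\<forall>nu\<in>S. 0 \<le> c nu) \<and>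
      (\<forall>alpha. f alpha = (\<Sum>nu\<in>S. c nu * p_coeff nu alpha)))"

end

theory Submission
  imports Defs
begin

text \<open>Every power sum p_nu contains the monomial x_1^|nu| with coefficient 1, so a
  nonnegative combination of power sums that has no monomial x_1^n at all is zero.
  On the other hand, Q_{lambda/mu} has no monomial x_1^n when the diagram contains
  the boxes (i,j), (i,j+1), (i+1,j+1): with letters 1' < 1 only, the box (i,j+1)
  must hold 1' because 1 cannot appear twice in its column, and then the box (i,j)
  must hold 1' too, a second 1' in the row. Yet Q_{lambda/mu} is nonzero, since
  every diagram has a tableau.\<close>

definition tableaux_of_content :: "nat list \<Rightarrow> nat list \<Rightarrow> nat list \<Rightarrow> (nat \<times> nat \<Rightarrow> nat) set" where
  "tableaux_of_content la mu alpha = {T. marked_shifted_tableau la mu T \<and>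
      (\<forall>i\<ge>1. card {b \<in> shifted_skew la mu. letter_abs (T b) = i} = expo alpha i)}"

lemma Q_coeff_eq_card: "Q_coeff la mu alpha = real (card (tableaux_of_content la mu alpha))"
  unfolding Q_coeff_def tableaux_of_content_def ..

lemma part_le_sum_list: "part l r \<le> sum_list l"
  unfolding part_def using elem_le_sum_list[of "r - 1" l] by auto

lemma shifted_skew_bounded:
  assumes "(r, c) \<in> shifted_skew la mu"
  shows "r + c < 2 * length la + sum_list la"
  using assms part_le_sum_list[of la r] unfolding shifted_skew_def by auto

lemma finite_shifted_skew: "finite (shifted_skew la mu)"
proof -
  let ?K = "2 * length la + sum_list la"
  have "shifted_skew la mu \<subseteq> {..<?K} \<times> {..<?K}"
    using shifted_skew_bounded by fastforce
  then show ?thesis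
    by (rule finite_subset) simp
qed

lemma marked_shifted_tableau_outside:
  "marked_shifted_tableau la mu T \<Longrightarrow> b \<notin> shifted_skew la mu \<Longrightarrow> T b = 0"
  unfolding marked_shifted_tableau_def Let_def by blast

lemma marked_shifted_tableau_inside:
  "marked_shifted_tableau la mu T \<Longrightarrow> b \<in> shifted_skew la mu \<Longrightarrow> 1 \<le> T b"
  unfolding marked_shifted_tableau_def Let_def by blast

lemma letter_abs_in_content:
  assumes T: "T \<in> tableaux_of_content la mu alpha" and b: "b \<in> shifted_skew la mu"
  shows "1 \<le> letter_abs (T b)" and "0 < expo alpha (letter_abs (T b))"
proof -
  let ?D = "shifted_skew la mu" and ?k = "letter_abs (T b)"
  have "1 \<le> T b"
    using T b marked_shifted_tableau_inside unfolding tableaux_of_content_def by blast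
  then show k: "1 \<le> ?k"
    unfolding letter_abs_def by simp
  have "b \<in> {b' \<in> ?D. letter_abs (T b') = ?k}"
    using b by simp
  moreover have "finite {b' \<in> ?D. letter_abs (T b') = ?k}"
    using finite_shifted_skew[of la mu] by simp
  ultimately have "0 < card {b' \<in> ?D. letter_abs (T b') = ?k}"
    using card_gt_0_iff by blast
  then show "0 < expo alpha ?k"
    using T k unfolding tableaux_of_content_def by simp
qed

lemma finite_tableaux_of_content: "finite (tableaux_of_content la mu alpha)"
proof -
  let ?D = "shifted_skew la mu"
  have "tableaux_of_content la mu alpha \<subseteq>
      {T. \<forall>b. (b \<in> ?D \<longrightarrow> T b \<in> {..2 * length alpha}) \<and> (b \<notin> ?D \<longrightarrow> T b = 0)}"
  proof (intro subsetI CollectI allI conjI impI)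
    fix T b assume T: "T \<in> tableaux_of_content la mu alpha"
    {
      assume b: "b \<in> ?D"
      have "letter_abs (T b) \<le> length alpha"
        using letter_abs_in_content(2)[OF T b] unfolding expo_def part_def
        by (auto split: if_splits)
      then show "T b \<in> {..2 * length alpha}"
        unfolding letter_abs_def by simp
    next
      assume "b \<notin> ?D"
      then show "T b = 0"
        using T marked_shifted_tableau_outside unfolding tableaux_of_content_def by blast
    }
  qed
  moreover have "finite {T. \<forall>b. (b \<in> ?D \<longrightarrow> T b \<in> {..2 * length alpha}) \<and> (b \<notin> ?D \<longrightarrow> T b = 0)}"
    by (rule finite_set_of_finite_funs[OF finite_shifted_skew]) simp
  ultimately show ?thesis
    by (rule finite_subset)
qed

lemma tableau_has_content:
  assumes "marked_shifted_tableau la mu T"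
  shows "\<exists>alpha. T \<in> tableaux_of_content la mu alpha"
proof -
  let ?D = "shifted_skew la mu"
  let ?m = "\<lambda>i. card {b \<in> ?D. letter_abs (T b) = i}"
  define N where "N = Max (insert 0 ((\<lambda>b. letter_abs (T b)) ` ?D))"
  define alpha where "alpha = map ?m [1..<N + 1]"
  have "?m i = expo alpha i" if "1 \<le> i" for i
  proof (cases "i \<le> N")
    case True
    then have "[1..<N + 1] ! (i - 1) = i"
      using that by (subst nth_upt) auto
    then show ?thesis
      using True that unfolding alpha_def expo_def part_def by (simp del: upt_Suc)
  next
    case False
    have "letter_abs (T b) \<le> N" if "b \<in> ?D" for b
      unfolding N_def using that finite_shifted_skew[of la mu] by (intro Max_ge) auto
    then have "{b \<in> ?D. letter_abs (T b) = i} = {}"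
      using False by fastforce
    moreover have "expo alpha i = 0"
      using False unfolding alpha_def expo_def part_def by simp
    ultimately show ?thesis
      by (metis card.empty)
  qed
  then show ?thesis
    using assms unfolding tableaux_of_content_def by auto
qed

text \<open>Row and column indices are at least 1 on the diagram, so 2(r+c) encodes an
  unmarked letter, and it increases strictly along rows and columns.\<close>
lemma marked_shifted_tableau_exists: "\<exists>T. marked_shifted_tableau la mu T"
proof -
  let ?D = "shifted_skew la mu"
  define T where "T = (\<lambda>b. if b \<in> ?D then 2 * (fst b + snd b) else 0)"
  have "1 \<le> r" if "(r, c) \<in> ?D" for r c
    using that unfolding shifted_skew_def by simp
  then have "marked_shifted_tableau la mu T"
    unfolding marked_shifted_tableau_def Let_def letter_marked_def T_def by fastforce
  then show ?thesis
    by blast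
qed

lemma Q_coeff_not_identically_zero: "\<exists>alpha. Q_coeff la mu alpha \<noteq> 0"
proof -
  obtain T where "marked_shifted_tableau la mu T"
    using marked_shifted_tableau_exists by blast
  then obtain alpha where "T \<in> tableaux_of_content la mu alpha"
    using tableau_has_content by blast
  then have "card (tableaux_of_content la mu alpha) \<noteq> 0"
    using finite_tableaux_of_content by (auto simp: card_eq_0_iff)
  then show ?thesis
    unfolding Q_coeff_eq_card by auto
qed

lemma no_tableau_in_one_letter:
  assumes "(i, j) \<in> shifted_skew la mu"
    and "(i, j + 1) \<in> shifted_skew la mu"
    and "(i + 1, j + 1) \<in> shifted_skew la mu"
  shows "tableaux_of_content la mu [n] = {}"
proof (rule ccontr)
  assume "tableaux_of_content la mu [n] \<noteq> {}"
  then obtain T where T: "T \<in> tableaux_of_content la mu [n]"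
    by blast
  have only_1: "T b \<in> {1, 2}" if "b \<in> shifted_skew la mu" for b
  proof -
    have "letter_abs (T b) = 1"
      using letter_abs_in_content[OF T that] unfolding expo_def part_def
      by (auto split: if_splits)
    then show ?thesis
      unfolding letter_abs_def by auto
  qed
  have "marked_shifted_tableau la mu T"
    using T unfolding tableaux_of_content_def by blast
  then have col: "T (i, j + 1) \<le> T (i + 1, j + 1)"
    and col_unmarked: "\<not> letter_marked (T (i, j + 1)) \<Longrightarrow> T (i, j + 1) \<noteq> T (i + 1, j + 1)"
    and row: "T (i, j) \<le> T (i, j + 1)"
    and row_marked: "letter_marked (T (i, j)) \<Longrightarrow> T (i, j) \<noteq> T (i, j + 1)"
    using assms unfolding marked_shifted_tableau_def Let_def by auto
  have "T (i, j + 1) = 1"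
    using col col_unmarked only_1[OF assms(2)] only_1[OF assms(3)]
    unfolding letter_marked_def by auto
  then show False
    using row row_marked only_1[OF assms(1)] unfolding letter_marked_def by auto
qed

lemma Q_coeff_one_variable:
  assumes "(i, j) \<in> shifted_skew la mu"
    and "(i, j + 1) \<in> shifted_skew la mu"
    and "(i + 1, j + 1) \<in> shifted_skew la mu"
  shows "Q_coeff la mu [n] = 0"
  unfolding Q_coeff_eq_card no_tableau_in_one_letter[OF assms] by simp

lemma p_coeff_one_variable:
  assumes "partition nu"
  shows "p_coeff nu [sum_list nu] = 1"
proof -
  let ?G = "{g :: nat list. length g = length nu \<and> (\<forall>k\<in>set g. 1 \<le> k) \<and>
      (\<forall>i\<ge>1. (\<Sum>j | j < length nu \<and> g ! j = i. nu ! j) = expo [sum_list nu] i)}"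
  have expo_one_variable: "expo [m] i = (if i = 1 then m else 0)" for m i
    unfolding expo_def part_def by auto
  have "replicate (length nu) 1 \<in> ?G"
  proof -
    have "{j. j < length nu \<and> replicate (length nu) (1::nat) ! j = i} =
        (if i = 1 then {..<length nu} else {})" for i :: nat
      by auto
    then show ?thesis
      by (simp add: expo_one_variable sum_list_sum_nth atLeast0LessThan)
  qed
  moreover have "g = replicate (length nu) 1" if g: "g \<in> ?G" for g
  proof (rule nth_equalityI)
    show "length g = length (replicate (length nu) 1)"
      using g by simp
    fix j assume j: "j < length g"
    have "g ! j \<ge> 1"
      using g j nth_mem[OF j] by auto
    show "g ! j = replicate (length nu) 1 ! j"
    proof (rule ccontr)
      assume "g ! j \<noteq> replicate (length nu) 1 ! j"
      then have "(\<Sum>j' | j' < length nu \<and> g ! j' = g ! j. nu ! j') = 0"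
        using g j \<open>g ! j \<ge> 1\<close> by (simp add: expo_one_variable)
      moreover have "j \<in> {j'. j' < length nu \<and> g ! j' = g ! j}"
        using g j by simp
      ultimately have "nu ! j = 0"
        by simp
      moreover have "nu ! j \<in> set nu"
        using g j by simp
      ultimately show False
        using assms unfolding partition_def by fastforce
    qed
  qed
  ultimately have "?G = {replicate (length nu) 1}"
    by blast
  then show ?thesis
    unfolding p_coeff_def by simp
qed

lemma p_positive_vanishing_on_one_variable:
  assumes "p_positive f" and vanish: "\<And>n. f [n] = 0"
  shows "f alpha = 0"
proof -
  obtain S c where S: "finite S" "\<forall>nu\<in>S. partition nu" "\<forall>nu\<in>S. 0 \<le> c nu"
    and f: "\<And>alpha. f alpha = (\<Sum>nu\<in>S. c nu * p_coeff nu alpha)"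
    using assms(1) unfolding p_positive_def by blast
  have nonneg: "0 \<le> c nu * p_coeff nu alpha" if "nu \<in> S" for nu alpha
    using S(3) that unfolding p_coeff_def by simp
  have "c nu = 0" if nu: "nu \<in> S" for nu
  proof -
    have "(\<Sum>nu'\<in>S. c nu' * p_coeff nu' [sum_list nu]) = 0"
      using vanish f by metis
    then have "c nu * p_coeff nu [sum_list nu] = 0"
      using sum_nonneg_eq_0_iff[OF S(1), of "\<lambda>nu'. c nu' * p_coeff nu' [sum_list nu]"] nonneg nu
      by blast
    then show ?thesis
      using p_coeff_one_variable S(2) nu by simp
  qed
  then show ?thesis
    unfolding f by simp
qed

theorem mainTheorem8:
  fixes la mu :: "nat list" and i j :: nat
  assumes "strict_partition la" and "strict_partition mu"
    and "part_contained mu la"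
    and "(i, j) \<in> shifted_skew la mu"
    and "(i, j + 1) \<in> shifted_skew la mu"
    and "(i + 1, j + 1) \<in> shifted_skew la mu"
  shows "\<not> p_positive (Q_coeff la mu)"
proof
  assume "p_positive (Q_coeff la mu)"
  then have "Q_coeff la mu alpha = 0" for alpha
    using p_positive_vanishing_on_one_variable Q_coeff_one_variable[OF assms(4-6)] by blast
  then show False
    using Q_coeff_not_identically_zero by blast
qed

end
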